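(* If $w,w'\in W_+$ and the affine planes $w\mathcal D_0$ and $w'\mathcal D_0$ are parallel (i.e. have the same direction subspace), then $w\mathcal D_0=w'\mathcal D_0$.
   Context: Let $R$ be an irreducible reduced root system of rank $n$ in $V=\mathbb C^n$ (spanning $\mathbb R^n$), with the standard symmetric bilinear form $(\cdot,\cdot)$, $\beta^\vee=2\beta/(\beta,\beta)$, reflections $s_\alpha(x)=x-(\alpha,x)\alpha^\vee$, Weyl group $W$, positive roots $R_+$ and simple roots $\Delta=\{\alpha_1,\dots,\alpha_n\}$. Let $\eta:R\to\mathbb C$ be a $W$-invariant function ($\eta_{w\alpha}=\eta_\alpha$). For $S\subset R$ put $H_\eta(S)=\{x\in V:(\alpha,x)=\eta_\alpha\ \forall\alpha\in S\}$. Fix $S_0\subset\Delta$ and let $W_+=\{w\in W: wS_0\subset R_+\}$, $\mathcal D_0=H_\eta(S_0)$. *)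

theory Defs
  imports "HOL-Analysis.Analysis"
begin

text \<open>V = C^n is modelled as complex ^ 'n with n = CARD('n).
  The standard symmetric (NOT Hermitian) bilinear form.\<close>

type_synonym 'n cvec = "complex ^ 'n"

definition bf :: "'n::finite cvec \<Rightarrow> 'n cvec \<Rightarrow> complex" where
  "bf x y = (\<Sum>i\<in>UNIV. x $ i * y $ i)"

definition is_real_vec :: "'n::finite cvec \<Rightarrow> bool" where
  "is_real_vec x \<longleftrightarrow> (\<forall>i. x $ i \<in> \<real>)"

definition coroot :: "'n::finite cvec \<Rightarrow> 'n cvec" where
  "coroot b = (2 / bf b b) *s b"

definition refl :: "'n::finite cvec \<Rightarrow> 'n cvec \<Rightarrow> 'n cvec" where
  "refl a x = x - bf a x *s coroot a"

definition root_system :: "'n::finite cvec set \<Rightarrow> bool" where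
  "root_system R \<longleftrightarrow>
     finite R \<and> 0 \<notin> R \<and> (\<forall>a\<in>R. is_real_vec a) \<and>
     (\<forall>x. is_real_vec x \<longrightarrow> (\<exists>c::'n cvec \<Rightarrow> real. x = (\<Sum>a\<in>R. complex_of_real (c a) *s a))) \<and>
     (\<forall>a\<in>R. refl a ` R = R) \<and>
     (\<forall>a\<in>R. \<forall>b\<in>R. bf b (coroot a) \<in> \<int>)"

definition reduced :: "'n::finite cvec set \<Rightarrow> bool" where
  "reduced R \<longleftrightarrow> (\<forall>a\<in>R. \<forall>c. c *s a \<in> R \<longrightarrow> c = 1 \<or> c = -1)"

definition irreducible_rs :: "'n::finite cvec set \<Rightarrow> bool" where
  "irreducible_rs R \<longleftrightarrow>
     \<not> (\<exists>A B. A \<noteq> {} \<and> B \<noteq> {} \<and> A \<union> B = R \<and> A \<inter> B = {} \<and>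
            (\<forall>a\<in>A. \<forall>b\<in>B. bf a b = 0))"

definition simple_system :: "'n::finite cvec set \<Rightarrow> 'n cvec set \<Rightarrow> bool" where
  "simple_system R D \<longleftrightarrow> D \<subseteq> R \<and>
     (\<forall>c::'n cvec \<Rightarrow> real. (\<Sum>a\<in>D. complex_of_real (c a) *s a) = 0 \<longrightarrow> (\<forall>a\<in>D. c a = 0)) \<and>
     (\<forall>b\<in>R. \<exists>k::'n cvec \<Rightarrow> int. b = (\<Sum>a\<in>D. of_int (k a) *s a) \<and>
              ((\<forall>a\<in>D. k a \<ge> 0) \<or> (\<forall>a\<in>D. k a \<le> 0)))"

definition pos_roots :: "'n::finite cvec set \<Rightarrow> 'n cvec set \<Rightarrow> 'n cvec set" where
  "pos_roots R D = {b\<in>R. \<exists>k::'n cvec \<Rightarrow> int. b = (\<Sum>a\<in>D. of_int (k a) *s a) \<and> (\<forall>a\<in>D. k a \<ge> 0)}"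

inductive_set weyl :: "'n::finite cvec set \<Rightarrow> ('n cvec \<Rightarrow> 'n cvec) set" for R where
  weyl_id: "id \<in> weyl R"
| weyl_step: "w \<in> weyl R \<Longrightarrow> a \<in> R \<Longrightarrow> refl a \<circ> w \<in> weyl R"

definition H_eta :: "('n::finite cvec \<Rightarrow> complex) \<Rightarrow> 'n cvec set \<Rightarrow> 'n cvec set" where
  "H_eta eta S = {x. \<forall>a\<in>S. bf a x = eta a}"

definition W_plus :: "'n::finite cvec set \<Rightarrow> 'n cvec set \<Rightarrow> 'n cvec set \<Rightarrow> ('n cvec \<Rightarrow> 'n cvec) set" where
  "W_plus R D S0 = {w\<in>weyl R. w ` S0 \<subseteq> pos_roots R D}"

definition direction :: "'n::finite cvec set \<Rightarrow> 'n cvec set" where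
  "direction A = {x - y | x y. x \<in> A \<and> y \<in> A}"

end

theory Submission
  imports Defs
begin

(* If D0 is empty there is nothing to prove.  Otherwise the direction of D0 is the
   annihilator S0^perp of S0, and Weyl group elements are linear isometries of the bilinear
   form, so the hypothesis says w(S0^perp) = w'(S0^perp).
   (1) For alpha in S0 the root gamma = w^-1(w' alpha) is orthogonal to every real vector of
       S0^perp, hence lies in the real span of S0.  Uniqueness of coordinates with respect to
       the simple roots shows that its integral coordinates are supported on S0 and of one
       sign; positivity of w(S0) and of w' alpha rules out the negative sign.  So every
       w' alpha is a nonnegative integral combination of w(S0), and vice versa.
   (2) The two transition matrices are nonnegative integral and compose to the identity;
       together with reducedness of R this forces w'(S0) = w(S0).
   (3) W-invariance of eta then gives w D0 = w' D0. *)

lemma bf_sym: "bf x y = bf y x"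
  unfolding bf_def by (simp add: mult.commute)

lemma bf_add_right: "bf z (x + y) = bf z x + bf z y"
  unfolding bf_def by (simp add: distrib_left sum.distrib)

lemma bf_diff_right: "bf z (x - y) = bf z x - bf z y"
  unfolding bf_def by (simp add: right_diff_distrib sum_subtractf)

lemma bf_scale_right: "bf z (c *s x) = c * bf z x"
  unfolding bf_def by (simp add: sum_distrib_left mult.left_commute)

lemma bf_scale_left: "bf (c *s x) z = c * bf x z"
  unfolding bf_def by (simp add: sum_distrib_left mult.assoc)

lemma bf_diff_left: "bf (x - y) z = bf x z - bf y z"
  unfolding bf_def by (simp add: left_diff_distrib sum_subtractf)

lemma refl_linear: "Vector_Spaces.linear (*s) (*s) (refl a)"
  unfolding Vector_Spaces.linear_iff refl_def
  by (simp add: vec.vector_space_axioms bf_add_right bf_scale_right algebra_simps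
      vector_ssub_ldistrib vector_smult_assoc)

lemma refl_bf:
  assumes "bf a a \<noteq> 0"
  shows "bf (refl a x) (refl a y) = bf x y"
  using assms unfolding refl_def coroot_def
  by (simp add: bf_diff_left bf_diff_right bf_scale_left bf_scale_right bf_sym[of x a] field_simps)

lemma refl_involutive:
  assumes "bf a a \<noteq> 0"
  shows "refl a (refl a x) = x"
proof -
  have "bf a (refl a x) = - bf a x"
    using assms unfolding refl_def coroot_def by (simp add: bf_diff_right bf_scale_right field_simps)
  then show ?thesis by (simp add: refl_def[of a "refl a x"]) (simp add: refl_def)
qed

lemma weyl_linear: "v \<in> weyl R \<Longrightarrow> Vector_Spaces.linear (*s) (*s) v"
proof (induction rule: weyl.induct)
  case weyl_id
  show ?case by (rule vec.linear_id)
next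
  case (weyl_step w a)
  show ?case using weyl_step.IH refl_linear by (rule Vector_Spaces.linear_compose)
qed

lemma weyl_combination:
  assumes "v \<in> weyl R"
  shows "v (\<Sum>a\<in>S. c a *s x a) = (\<Sum>a\<in>S. c a *s v (x a))"
  by (simp add: vec.linear_sum[OF weyl_linear[OF assms]] vec.linear_scale[OF weyl_linear[OF assms]])

lemma weyl_bf:
  assumes "\<forall>a\<in>R. bf a a \<noteq> 0" and "v \<in> weyl R"
  shows "bf (v x) (v y) = bf x y"
  using assms(2) by (induction arbitrary: x y rule: weyl.induct) (simp_all add: refl_bf assms(1))

(* Weyl group elements are bijective, being products of involutions. *)
lemma weyl_bij:
  assumes "\<forall>a\<in>R. bf a a \<noteq> 0" and "v \<in> weyl R"
  shows "bij v"
  using assms(2)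
proof (induction rule: weyl.induct)
  case weyl_id
  show ?case by (rule bij_id)
next
  case (weyl_step w a)
  have "bij (refl a)" using refl_involutive assms(1) weyl_step(2) by (metis involuntory_imp_bij)
  then show ?case using weyl_step.IH by (rule bij_comp[rotated])
qed

lemma weyl_permutes:
  assumes "\<forall>a\<in>R. refl a ` R = R" and "v \<in> weyl R"
  shows "v ` R = R"
  using assms(2)
proof (induction rule: weyl.induct)
  case (weyl_step w a)
  have "(refl a \<circ> w) ` R = refl a ` (w ` R)" by (rule image_comp[symmetric])
  then show ?case using weyl_step.IH assms(1) weyl_step(2) by simp
qed simp

(* On real vectors the form is positive definite, so roots are non-isotropic. *)
lemma real_vec_bf_self_nonzero:
  assumes "is_real_vec a" and "a \<noteq> 0"
  shows "bf a a \<noteq> 0"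
proof
  assume zero: "bf a a = 0"
  have re: "complex_of_real (Re (a $ i)) = a $ i" for i
    using assms(1) unfolding is_real_vec_def by (metis Reals_cases Re_complex_of_real)
  then have "bf a a = complex_of_real (\<Sum>i\<in>UNIV. (Re (a $ i))\<^sup>2)"
    unfolding bf_def of_real_sum by (simp add: power2_eq_square)
  with zero have "(\<Sum>i\<in>UNIV. (Re (a $ i))\<^sup>2) = 0" by (simp only: of_real_eq_0_iff)
  then have "Re (a $ i) = 0" for i using sum_nonneg_eq_0_iff[of UNIV "\<lambda>i. (Re (a $ i))\<^sup>2"] by simp
  then have "a $ i = 0" for i using re[of i] by simp
  then have "a = 0" by (simp add: vec_eq_iff)
  with assms(2) show False ..
qed

lemma root_system_nondegenerate: "root_system R \<Longrightarrow> \<forall>a\<in>R. bf a a \<noteq> 0"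
  using real_vec_bf_self_nonzero by (auto simp: root_system_def)

lemma root_system_reflections: "root_system R \<Longrightarrow> \<forall>a\<in>R. refl a ` R = R"
  by (simp add: root_system_def)

(* A simple system is finite: over an infinite set every sum is 0, contradicting
   linear independence. *)
lemma simple_system_finite:
  assumes "simple_system R D"
  shows "finite D"
proof (rule ccontr)
  assume inf: "infinite D"
  have indep: "\<And>c. (\<Sum>a\<in>D. complex_of_real (c a) *s a) = 0 \<Longrightarrow> \<forall>a\<in>D. c a = 0"
    using assms by (simp add: simple_system_def)
  have "\<forall>a\<in>D. (\<lambda>_. 1::real) a = 0" by (rule indep) (simp add: inf)
  moreover have "D \<noteq> {}" using inf by auto
  ultimately show False by auto
qed

lemma simple_subset:
  assumes "simple_system R D" and "S \<subseteq> D"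
  shows "S \<subseteq> R \<and> finite S"
  using assms simple_system_finite[OF assms(1)] finite_subset unfolding simple_system_def by blast

lemma simple_coords_unique:
  assumes ss: "simple_system R D" and sub: "S \<subseteq> D"
    and eq: "(\<Sum>a\<in>S. complex_of_real (f a) *s a) = (\<Sum>a\<in>S. complex_of_real (g a) *s a)"
  shows "\<forall>a\<in>S. f a = g a"
proof -
  define c where "c a = (if a \<in> S then f a - g a else 0)" for a
  have finD: "finite D" using ss by (rule simple_system_finite)
  have "(\<Sum>a\<in>D. complex_of_real (c a) *s a) = (\<Sum>a\<in>D. if a \<in> S then complex_of_real (f a - g a) *s a else 0)"
    by (rule sum.cong) (auto simp: c_def)
  also have "\<dots> = (\<Sum>a\<in>D \<inter> S. complex_of_real (f a - g a) *s a)"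
    by (rule sum.inter_restrict[OF finD, symmetric])
  also have "D \<inter> S = S" using sub by blast
  also have "(\<Sum>a\<in>S. complex_of_real (f a - g a) *s a)
      = (\<Sum>a\<in>S. complex_of_real (f a) *s a) - (\<Sum>a\<in>S. complex_of_real (g a) *s a)"
    by (simp add: vector_sub_rdistrib sum_subtractf)
  also have "\<dots> = 0" using eq by simp
  finally have c0: "\<forall>a\<in>D. c a = 0" using ss unfolding simple_system_def by blast
  show ?thesis
  proof
    fix a assume "a \<in> S"
    with sub c0 have "c a = 0" by blast
    with \<open>a \<in> S\<close> show "f a = g a" by (simp add: c_def)
  qed
qed

lemma simple_coords_unique_int:
  assumes "simple_system R D" and "S \<subseteq> D"
    and "(\<Sum>a\<in>S. of_int (f a) *s a) = (\<Sum>a\<in>S. of_int (g a) *s a)"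
  shows "\<forall>a\<in>S. f a = (g a :: int)"
  using simple_coords_unique[OF assms(1,2), of "\<lambda>a. of_int (f a)" "\<lambda>a. of_int (g a)"] assms(3)
  by simp

lemma sum_scale_sum_swap:
  fixes y :: "'b \<Rightarrow> 'n::finite cvec"
  assumes "finite S" and "finite T"
  shows "(\<Sum>a\<in>S. k a *s (\<Sum>b\<in>T. M a b *s y b)) = (\<Sum>b\<in>T. (\<Sum>a\<in>S. k a * M a b) *s y b)"
proof -
  have "(\<Sum>a\<in>S. k a *s (\<Sum>b\<in>T. M a b *s y b)) = (\<Sum>a\<in>S. \<Sum>b\<in>T. (k a * M a b) *s y b)"
    by (simp add: vec.scale_sum_right vector_smult_assoc)
  also have "\<dots> = (\<Sum>b\<in>T. \<Sum>a\<in>S. (k a * M a b) *s y b)" by (rule sum.swap)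
  also have "\<dots> = (\<Sum>b\<in>T. (\<Sum>a\<in>S. k a * M a b) *s y b)" by (simp add: vec.scale_sum_left)
  finally show ?thesis .
qed

lemma sum_single_support:
  fixes y :: "'a \<Rightarrow> 'n::finite cvec"
  assumes "finite S" and "\<alpha> \<in> S" and "\<forall>b\<in>S. b \<noteq> \<alpha> \<longrightarrow> c b = 0"
  shows "(\<Sum>b\<in>S. c b *s y b) = c \<alpha> *s y \<alpha>"
proof -
  have "(\<Sum>b\<in>S. c b *s y b) = (\<Sum>b\<in>S. if b = \<alpha> then c \<alpha> *s y \<alpha> else 0)"
    using assms(3) by (intro sum.cong) auto
  then show ?thesis using assms(1,2) by simp
qed

(* Passage between complex vectors with real entries and vectors of the Euclidean space
   real ^ 'n, where the bilinear form becomes the inner product. *)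
definition re_vec :: "'n::finite cvec \<Rightarrow> real ^ 'n" where
  "re_vec v = (\<chi> i. Re (v $ i))"

definition of_real_vec :: "real ^ 'n \<Rightarrow> 'n::finite cvec" where
  "of_real_vec u = (\<chi> i. complex_of_real (u $ i))"

lemma of_real_vec_re_vec: "is_real_vec v \<Longrightarrow> of_real_vec (re_vec v) = v"
  unfolding of_real_vec_def re_vec_def is_real_vec_def by (simp add: vec_eq_iff)

lemma bf_of_real_vec: "is_real_vec v \<Longrightarrow> bf v (of_real_vec u) = complex_of_real (inner (re_vec v) u)"
  by (subst of_real_vec_re_vec[symmetric], assumption)
     (simp add: bf_def inner_vec_def of_real_vec_def re_vec_def of_real_sum)

lemma of_real_vec_sum_scale:
  "finite A \<Longrightarrow> of_real_vec (\<Sum>a\<in>A. c a *\<^sub>R x a) = (\<Sum>a\<in>A. complex_of_real (c a) *s of_real_vec (x a))"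
  by (induction rule: finite_induct) (simp_all add: of_real_vec_def vec_eq_iff)

(* Double orthogonal complement: a real vector orthogonal to every real vector that is
   orthogonal to the real family S lies in the real span of S. *)
lemma real_span_of_orthogonal:
  fixes S :: "'n::finite cvec set"
  assumes fin: "finite S" and real_S: "\<forall>a\<in>S. is_real_vec a" and real_g: "is_real_vec g"
    and orth: "\<And>u. \<forall>a\<in>S. bf a (of_real_vec u) = 0 \<Longrightarrow> bf g (of_real_vec u) = 0"
  shows "\<exists>c. g = (\<Sum>a\<in>S. complex_of_real (c a) *s a)"
proof -
  obtain p z where p: "p \<in> span (re_vec ` S)" and z: "\<And>v. v \<in> span (re_vec ` S) \<Longrightarrow> orthogonal z v"
    and decomp: "re_vec g = p + z"
    using orthogonal_subspace_decomp_exists by blast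
  have "\<forall>a\<in>S. bf a (of_real_vec z) = 0"
    using z[OF span_base] real_S by (simp add: bf_of_real_vec orthogonal_def inner_commute[of z])
  then have "bf g (of_real_vec z) = 0" by (rule orth)
  then have "inner (p + z) z = 0" using bf_of_real_vec[OF real_g] decomp by simp
  moreover have "inner p z = 0" using z[OF p] by (simp add: orthogonal_def inner_commute)
  ultimately have "z = 0" by (simp add: inner_add_left)
  then have "re_vec g \<in> span (re_vec ` S)" using decomp p by simp
  then obtain u where u: "re_vec g = (\<Sum>v\<in>re_vec ` S. u v *\<^sub>R v)"
    using span_finite[of "re_vec ` S"] fin by auto
  have inj: "inj_on re_vec S" using real_S of_real_vec_re_vec by (metis inj_onI)
  have "g = of_real_vec (re_vec g)" using real_g by (simp add: of_real_vec_re_vec)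
  also have "\<dots> = of_real_vec (\<Sum>a\<in>S. u (re_vec a) *\<^sub>R re_vec a)"
    using u sum.reindex[OF inj, of "\<lambda>v. u v *\<^sub>R v"] by simp
  also have "\<dots> = (\<Sum>a\<in>S. complex_of_real (u (re_vec a)) *s a)"
    using fin real_S by (simp add: of_real_vec_sum_scale of_real_vec_re_vec)
  finally show ?thesis by (intro exI[of _ "\<lambda>a. u (re_vec a)"])
qed

definition annihilator :: "'n::finite cvec set \<Rightarrow> 'n cvec set" where
  "annihilator S = {u. \<forall>a\<in>S. bf a u = 0}"

lemma direction_H_eta:
  assumes x0: "x0 \<in> H_eta eta S"
  shows "direction (H_eta eta S) = annihilator S"
proof
  show "direction (H_eta eta S) \<subseteq> annihilator S"
    unfolding direction_def annihilator_def H_eta_def by (auto simp: bf_diff_right)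
next
  show "annihilator S \<subseteq> direction (H_eta eta S)"
  proof
    fix u assume "u \<in> annihilator S"
    then have "x0 + u \<in> H_eta eta S" using x0 by (simp add: annihilator_def H_eta_def bf_add_right)
    moreover have "u = (x0 + u) - x0" by simp
    ultimately show "u \<in> direction (H_eta eta S)" using x0 unfolding direction_def by blast
  qed
qed

lemma direction_linear_image:
  assumes lin: "Vector_Spaces.linear (*s) (*s) f"
  shows "direction (f ` A) = f ` direction A"
proof -
  have "{f x - f y |x y. x \<in> A \<and> y \<in> A} = f ` {x - y |x y. x \<in> A \<and> y \<in> A}"
    by (auto simp: vec.linear_diff[OF lin, symmetric])
  then show ?thesis unfolding direction_def by blast
qed

lemma root_in_span_of_simple_subset:
  assumes ss: "simple_system R D" and sub: "S \<subseteq> D" and root: "\<gamma> \<in> R"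
    and span: "\<gamma> = (\<Sum>a\<in>S. complex_of_real (c a) *s a)"
  shows "\<exists>k::'n::finite cvec \<Rightarrow> int. \<gamma> = (\<Sum>a\<in>S. of_int (k a) *s a) \<and>
           ((\<forall>a\<in>S. 0 \<le> k a) \<or> (\<forall>a\<in>S. k a \<le> 0))"
proof -
  obtain k :: "'n cvec \<Rightarrow> int" where gk: "\<gamma> = (\<Sum>a\<in>D. of_int (k a) *s a)"
    and signs: "(\<forall>a\<in>D. 0 \<le> k a) \<or> (\<forall>a\<in>D. k a \<le> 0)"
    using ss root unfolding simple_system_def by blast
  have finD: "finite D" using ss by (rule simple_system_finite)
  have "(\<Sum>a\<in>D. complex_of_real (if a \<in> S then c a else 0) *s a)
      = (\<Sum>a\<in>D. if a \<in> S then complex_of_real (c a) *s a else 0)"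
    by (rule sum.cong) auto
  also have "\<dots> = (\<Sum>a\<in>D \<inter> S. complex_of_real (c a) *s a)"
    by (rule sum.inter_restrict[OF finD, symmetric])
  also have "D \<inter> S = S" using sub by blast
  finally have "(\<Sum>a\<in>D. complex_of_real (of_int (k a)) *s a)
      = (\<Sum>a\<in>D. complex_of_real (if a \<in> S then c a else 0) *s a)"
    using gk span by simp
  then have kc: "\<forall>a\<in>D. of_int (k a) = (if a \<in> S then c a else 0)"
    by (rule simple_coords_unique[OF ss order_refl])
  have "\<gamma> = (\<Sum>a\<in>S. of_int (k a) *s a)"
    unfolding span
  proof (intro sum.cong refl)
    fix a assume "a \<in> S"
    then have "c a = of_int (k a)" using kc sub by auto
    then show "complex_of_real (c a) *s a = of_int (k a) *s a" by simp
  qed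
  then show ?thesis using signs sub by blast
qed

(* A positive root which is a nonpositive combination of positive roots vanishes:
   its simple-root coordinates are both nonnegative and nonpositive. *)
lemma pos_root_nonpos_combination_zero:
  fixes x :: "'a \<Rightarrow> 'n::finite cvec" and k :: "'a \<Rightarrow> int"
  assumes ss: "simple_system R D" and fin: "finite S"
    and pos: "\<forall>a\<in>S. x a \<in> pos_roots R D" and nonpos: "\<forall>a\<in>S. k a \<le> 0"
    and comb: "(\<Sum>a\<in>S. of_int (k a) *s x a) \<in> pos_roots R D"
  shows "(\<Sum>a\<in>S. of_int (k a) *s x a) = 0"
proof -
  have finD: "finite D" using ss by (rule simple_system_finite)
  obtain M :: "'a \<Rightarrow> 'n cvec \<Rightarrow> int"
    where M: "\<And>a. a \<in> S \<Longrightarrow> x a = (\<Sum>d\<in>D. of_int (M a d) *s d) \<and> (\<forall>d\<in>D. 0 \<le> M a d)"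
  proof -
    have "\<forall>a\<in>S. \<exists>m::'n cvec \<Rightarrow> int. x a = (\<Sum>d\<in>D. of_int (m d) *s d) \<and> (\<forall>d\<in>D. 0 \<le> m d)"
      using pos unfolding pos_roots_def by blast
    then show ?thesis using that by metis
  qed
  obtain n :: "'n cvec \<Rightarrow> int" where n: "(\<Sum>a\<in>S. of_int (k a) *s x a) = (\<Sum>d\<in>D. of_int (n d) *s d)"
    and n_nonneg: "\<forall>d\<in>D. 0 \<le> n d"
    using comb unfolding pos_roots_def by blast
  have "(\<Sum>a\<in>S. of_int (k a) *s x a) = (\<Sum>a\<in>S. of_int (k a) *s (\<Sum>d\<in>D. of_int (M a d) *s d))"
    using M by (intro sum.cong) auto
  also have "\<dots> = (\<Sum>d\<in>D. of_int (\<Sum>a\<in>S. k a * M a d) *s d)"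
    using sum_scale_sum_swap[OF fin finD] by simp
  finally have "(\<Sum>d\<in>D. of_int (n d) *s d) = (\<Sum>d\<in>D. of_int (\<Sum>a\<in>S. k a * M a d) *s d)"
    using n by simp
  then have "\<forall>d\<in>D. n d = (\<Sum>a\<in>S. k a * M a d)"
    by (rule simple_coords_unique_int[OF ss order_refl])
  moreover have "\<forall>d\<in>D. (\<Sum>a\<in>S. k a * M a d) \<le> 0"
    using nonpos M by (auto intro!: sum_nonpos mult_nonpos_nonneg)
  ultimately have "\<forall>d\<in>D. n d = 0" using n_nonneg by force
  then show ?thesis unfolding n by simp
qed

(* Integral coordinates with respect to the image v(S) of simple roots are unique, because
   v is injective and linear. *)
lemma weyl_image_coords_unique_int:
  assumes nondeg: "\<forall>a\<in>R. bf a a \<noteq> 0" and v: "v \<in> weyl R"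
    and ss: "simple_system R D" and sub: "S \<subseteq> D"
    and eq: "(\<Sum>a\<in>S. of_int (f a) *s v a) = (\<Sum>a\<in>S. of_int (g a) *s v a)"
  shows "\<forall>a\<in>S. f a = (g a :: int)"
proof -
  have "v (\<Sum>a\<in>S. of_int (f a) *s a) = v (\<Sum>a\<in>S. of_int (g a) *s a)"
    using eq by (simp add: weyl_combination[OF v])
  then have "(\<Sum>a\<in>S. of_int (f a) *s a) = (\<Sum>a\<in>S. of_int (g a) *s a)"
    using weyl_bij[OF nondeg v] by (simp add: bij_is_inj inj_eq)
  then show ?thesis by (rule simple_coords_unique_int[OF ss sub])
qed

(* If w S^perp = w' S^perp and w gamma = w' alpha with alpha in S, then gamma is orthogonal
   to S^perp: pairing with w u = w' y reduces to (alpha, y) = 0. *)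
lemma preimage_orthogonal_to_annihilator:
  assumes nondeg: "\<forall>a\<in>R. bf a a \<noteq> 0" and ww: "w \<in> weyl R" "w' \<in> weyl R"
    and parallel: "w ` annihilator S = w' ` annihilator S"
    and \<alpha>: "\<alpha> \<in> S" and \<gamma>: "w \<gamma> = w' \<alpha>" and u: "u \<in> annihilator S"
  shows "bf \<gamma> u = 0"
proof -
  have "w u \<in> w' ` annihilator S" using u parallel by blast
  then obtain y where y: "y \<in> annihilator S" "w u = w' y" by blast
  have "bf \<gamma> u = bf (w \<gamma>) (w u)" by (simp add: weyl_bf[OF nondeg ww(1)])
  also have "\<dots> = bf (w' \<alpha>) (w' y)" using \<gamma> y by simp
  also have "\<dots> = bf \<alpha> y" by (simp add: weyl_bf[OF nondeg ww(2)])
  also have "\<dots> = 0" using y \<alpha> by (simp add: annihilator_def)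
  finally show ?thesis .
qed

lemma parallel_images_nonneg_combination:
  assumes rs: "root_system R" and ss: "simple_system R D" and sub: "S0 \<subseteq> D"
    and w: "w \<in> W_plus R D S0" and w': "w' \<in> W_plus R D S0"
    and parallel: "w ` annihilator S0 = w' ` annihilator S0"
    and \<alpha>: "\<alpha> \<in> S0"
  shows "\<exists>k::'n::finite cvec \<Rightarrow> int. (\<forall>a\<in>S0. 0 \<le> k a) \<and> w' \<alpha> = (\<Sum>a\<in>S0. of_int (k a) *s w a)"
proof -
  have ww: "w \<in> weyl R" "w' \<in> weyl R" using w w' unfolding W_plus_def by auto
  have nondeg: "\<forall>a\<in>R. bf a a \<noteq> 0" by (rule root_system_nondegenerate[OF rs])
  have S0R: "S0 \<subseteq> R" and finS0: "finite S0" using simple_subset[OF ss sub] by auto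
  have real_R: "\<forall>a\<in>R. is_real_vec a" using rs unfolding root_system_def by blast
  note permutes = weyl_permutes[OF root_system_reflections[OF rs]]
  have w'\<alpha>: "w' \<alpha> \<in> R" using permutes[OF ww(2)] \<alpha> S0R by blast
  then have "w' \<alpha> \<in> w ` R" using permutes[OF ww(1)] by simp
  then obtain \<gamma> where \<gamma>: "\<gamma> \<in> R" "w \<gamma> = w' \<alpha>" by (auto simp: eq_commute)
  have orth: "bf \<gamma> (of_real_vec u) = 0" if "\<forall>a\<in>S0. bf a (of_real_vec u) = 0" for u
    using preimage_orthogonal_to_annihilator[OF nondeg ww parallel \<alpha> \<gamma>(2)] that
    by (simp add: annihilator_def)
  obtain c where "\<gamma> = (\<Sum>a\<in>S0. complex_of_real (c a) *s a)"
    using real_span_of_orthogonal[OF finS0 _ _ orth] real_R S0R \<gamma>(1) by blast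
  then obtain k :: "'n cvec \<Rightarrow> int" where k: "\<gamma> = (\<Sum>a\<in>S0. of_int (k a) *s a)"
    and signs: "(\<forall>a\<in>S0. 0 \<le> k a) \<or> (\<forall>a\<in>S0. k a \<le> 0)"
    using root_in_span_of_simple_subset[OF ss sub \<gamma>(1)] by blast
  have comb: "w' \<alpha> = (\<Sum>a\<in>S0. of_int (k a) *s w a)"
    unfolding \<gamma>(2)[symmetric] k by (rule weyl_combination[OF ww(1)])
  show ?thesis
  proof (cases "\<forall>a\<in>S0. 0 \<le> k a")
    case True
    then show ?thesis using comb by blast
  next
    case False
    then have nonpos: "\<forall>a\<in>S0. k a \<le> 0" using signs by blast
    have pos: "\<forall>a\<in>S0. w a \<in> pos_roots R D" using w unfolding W_plus_def by auto
    have "w' \<alpha> \<in> pos_roots R D" using w' \<alpha> unfolding W_plus_def by auto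
    then have "(\<Sum>a\<in>S0. of_int (k a) *s w a) = 0"
      using pos_root_nonpos_combination_zero[OF ss finS0 pos nonpos] comb by simp
    then have "w' \<alpha> = 0" using comb by simp
    moreover have "0 \<notin> R" using rs unfolding root_system_def by blast
    ultimately show ?thesis using w'\<alpha> by simp
  qed
qed

(* Combinatorial core of step (2): if a nonnegative integer row k times a nonnegative
   integer matrix M is the unit row e_alpha, some row of M is a positive multiple of e_alpha. *)
lemma nonneg_int_row_unit:
  fixes k :: "'a \<Rightarrow> int" and M :: "'a \<Rightarrow> 'a \<Rightarrow> int"
  assumes fin: "finite S" and \<alpha>: "\<alpha> \<in> S"
    and k_nonneg: "\<forall>a\<in>S. 0 \<le> k a" and M_nonneg: "\<forall>a\<in>S. \<forall>b\<in>S. 0 \<le> M a b"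
    and prod: "\<forall>b\<in>S. (\<Sum>a\<in>S. k a * M a b) = (if b = \<alpha> then 1 else 0)"
  shows "\<exists>a0\<in>S. 0 < M a0 \<alpha> \<and> (\<forall>b\<in>S. b \<noteq> \<alpha> \<longrightarrow> M a0 b = 0)"
proof -
  have nonneg: "0 \<le> k a * M a b" if "a \<in> S" "b \<in> S" for a b
    using that k_nonneg M_nonneg by simp
  obtain a0 where a0: "a0 \<in> S" "0 < k a0 * M a0 \<alpha>"
  proof (rule ccontr)
    assume "\<not> thesis"
    then have "\<forall>a\<in>S. k a * M a \<alpha> \<le> 0" using that by force
    then have "(\<Sum>a\<in>S. k a * M a \<alpha>) \<le> 0" by (intro sum_nonpos) auto
    then show False using prod \<alpha> by simp
  qed
  then have k_pos: "0 < k a0" and M_pos: "0 < M a0 \<alpha>"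
    using k_nonneg M_nonneg \<alpha> by (auto simp: zero_less_mult_iff)
  have "M a0 b = 0" if b: "b \<in> S" "b \<noteq> \<alpha>" for b
  proof -
    have "k a0 * M a0 b \<le> (\<Sum>a\<in>S. k a * M a b)"
      using member_le_sum[of a0 S "\<lambda>a. k a * M a b"] nonneg b(1) a0(1) fin by blast
    also have "\<dots> = 0" using prod b by simp
    finally have "k a0 * M a0 b = 0" using nonneg[OF a0(1) b(1)] by simp
    then show ?thesis using k_pos by simp
  qed
  then show ?thesis using a0(1) M_pos by blast
qed

lemma reduced_positive_int_multiple:
  assumes "reduced R" and "x \<in> R" and "of_int m *s x \<in> R" and "0 < m"
  shows "m = 1"
proof -
  have "(of_int m :: complex) = 1 \<or> of_int m = (-1 :: complex)"
    using assms(1-3) unfolding reduced_def by blast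
  then have "m = 1 \<or> m = -1" by (metis of_int_eq_1_iff of_int_eq_iff of_int_minus of_int_1)
  then show ?thesis using assms(4) by auto
qed

(* Step (2): if w'(S0) and w(S0) are nonnegative integral combinations of each other, then
   w'(S0) is contained in w(S0); reducedness makes the positive multiple equal to 1. *)
lemma mutual_nonneg_combinations_image:
  assumes rs: "root_system R" and red: "reduced R" and ss: "simple_system R D" and sub: "S0 \<subseteq> D"
    and ww: "w \<in> weyl R" "w' \<in> weyl R"
    and w'_in_w: "\<forall>\<alpha>\<in>S0. \<exists>k::'n::finite cvec \<Rightarrow> int.
                   (\<forall>a\<in>S0. 0 \<le> k a) \<and> w' \<alpha> = (\<Sum>a\<in>S0. of_int (k a) *s w a)"
    and w_in_w': "\<forall>a\<in>S0. \<exists>m::'n cvec \<Rightarrow> int.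
                   (\<forall>b\<in>S0. 0 \<le> m b) \<and> w a = (\<Sum>b\<in>S0. of_int (m b) *s w' b)"
  shows "w' ` S0 \<subseteq> w ` S0"
proof
  fix \<beta> assume "\<beta> \<in> w' ` S0"
  then obtain \<alpha> where \<alpha>: "\<alpha> \<in> S0" and \<beta>: "\<beta> = w' \<alpha>" by blast
  have S0R: "S0 \<subseteq> R" and finS0: "finite S0" using simple_subset[OF ss sub] by auto
  obtain k where k_nonneg: "\<forall>a\<in>S0. 0 \<le> k a" and k: "w' \<alpha> = (\<Sum>a\<in>S0. of_int (k a) *s w a)"
    using w'_in_w \<alpha> by blast
  obtain M where M: "\<And>a. a \<in> S0 \<Longrightarrow> (\<forall>b\<in>S0. 0 \<le> M a b) \<and> w a = (\<Sum>b\<in>S0. of_int (M a b) *s w' b)"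
    using w_in_w' by metis
  have "w' \<alpha> = (\<Sum>a\<in>S0. of_int (k a) *s (\<Sum>b\<in>S0. of_int (M a b) *s w' b))"
    unfolding k using M by (intro sum.cong) auto
  also have "\<dots> = (\<Sum>b\<in>S0. of_int (\<Sum>a\<in>S0. k a * M a b) *s w' b)"
    using sum_scale_sum_swap[OF finS0 finS0] by simp
  finally have expand: "w' \<alpha> = (\<Sum>b\<in>S0. of_int (\<Sum>a\<in>S0. k a * M a b) *s w' b)" .
  have "(\<Sum>b\<in>S0. of_int (if b = \<alpha> then 1 else 0) *s w' b) = w' \<alpha>"
    using sum_single_support[OF finS0 \<alpha>, of "\<lambda>b. of_int (if b = \<alpha> then 1 else 0)"] by simp
  then have "(\<Sum>b\<in>S0. of_int (\<Sum>a\<in>S0. k a * M a b) *s w' b)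
      = (\<Sum>b\<in>S0. of_int (if b = \<alpha> then 1 else 0) *s w' b)"
    using expand by simp
  then have unit: "\<forall>b\<in>S0. (\<Sum>a\<in>S0. k a * M a b) = (if b = \<alpha> then 1 else 0)"
    by (rule weyl_image_coords_unique_int[OF root_system_nondegenerate[OF rs] ww(2) ss sub])
  have M_nonneg: "\<forall>a\<in>S0. \<forall>b\<in>S0. 0 \<le> M a b" using M by blast
  obtain a0 where a0: "a0 \<in> S0" and M_pos: "0 < M a0 \<alpha>"
    and M_zero: "\<forall>b\<in>S0. b \<noteq> \<alpha> \<longrightarrow> M a0 b = 0"
    using nonneg_int_row_unit[OF finS0 \<alpha> k_nonneg M_nonneg unit] by blast
  have "w a0 = (\<Sum>b\<in>S0. of_int (M a0 b) *s w' b)" using M a0 by blast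
  also have "\<dots> = of_int (M a0 \<alpha>) *s w' \<alpha>"
    using sum_single_support[OF finS0 \<alpha>, of "\<lambda>b. of_int (M a0 b)"] M_zero by simp
  finally have w_a0: "w a0 = of_int (M a0 \<alpha>) *s w' \<alpha>" .
  note permutes = weyl_permutes[OF root_system_reflections[OF rs]]
  have "w' \<alpha> \<in> R" "w a0 \<in> R" using permutes[OF ww(2)] permutes[OF ww(1)] \<alpha> a0 S0R by blast+
  then have "M a0 \<alpha> = 1"
    using reduced_positive_int_multiple[OF red _ _ M_pos] w_a0 by simp
  then have "\<beta> = w a0" using w_a0 \<beta> by simp
  then show "\<beta> \<in> w ` S0" using a0 by blast
qed

(* Step (3): w'(S0) within w(S0) gives w D0 within w' D0, by W-invariance of eta. *)
lemma weyl_image_H_eta_mono: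
  assumes nondeg: "\<forall>a\<in>R. bf a a \<noteq> 0" and eta: "\<forall>v\<in>weyl R. \<forall>a\<in>R. eta (v a) = eta a"
    and S0R: "S0 \<subseteq> R" and ww: "w \<in> weyl R" "w' \<in> weyl R"
    and sub: "w' ` S0 \<subseteq> w ` S0"
  shows "w ` H_eta eta S0 \<subseteq> w' ` H_eta eta S0"
proof
  fix x assume "x \<in> w ` H_eta eta S0"
  then obtain y where y: "y \<in> H_eta eta S0" "x = w y" by blast
  obtain y' where y': "x = w' y'" using weyl_bij[OF nondeg ww(2)] by (metis bij_pointE)
  have "bf \<alpha> y' = eta \<alpha>" if \<alpha>: "\<alpha> \<in> S0" for \<alpha>
  proof -
    obtain a where a: "a \<in> S0" "w' \<alpha> = w a" using sub \<alpha> by blast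
    have "bf \<alpha> y' = bf (w' \<alpha>) (w' y')" by (simp add: weyl_bf[OF nondeg ww(2)])
    also have "\<dots> = bf (w a) (w y)" using a y y' by simp
    also have "\<dots> = bf a y" by (simp add: weyl_bf[OF nondeg ww(1)])
    also have "\<dots> = eta a" using y a unfolding H_eta_def by simp
    also have "\<dots> = eta (w a)" using eta ww a S0R by auto
    also have "\<dots> = eta \<alpha>" using eta ww \<alpha> a S0R by (metis subsetD)
    finally show ?thesis .
  qed
  then have "y' \<in> H_eta eta S0" unfolding H_eta_def by blast
  then show "x \<in> w' ` H_eta eta S0" using y' by blast
qed

theorem mainTheorem2:
  fixes R D S0 :: "'n::finite cvec set"
    and eta :: "'n cvec \<Rightarrow> complex"
    and w w' :: "'n cvec \<Rightarrow> 'n cvec"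
  assumes "root_system R" and "reduced R" and "irreducible_rs R"
    and "simple_system R D"
    and "\<forall>v\<in>weyl R. \<forall>a\<in>R. eta (v a) = eta a"
    and "S0 \<subseteq> D"
    and "w \<in> W_plus R D S0" and "w' \<in> W_plus R D S0"
    and "direction (w ` H_eta eta S0) = direction (w' ` H_eta eta S0)"
  shows "w ` H_eta eta S0 = w' ` H_eta eta S0"
proof (cases "H_eta eta S0 = {}")
  case True
  then show ?thesis by simp
next
  case False
  then obtain x0 where x0: "x0 \<in> H_eta eta S0" by blast
  have ww: "w \<in> weyl R" "w' \<in> weyl R" using assms(7,8) unfolding W_plus_def by auto
  have S0R: "S0 \<subseteq> R" using simple_subset[OF assms(4,6)] by blast
  have parallel: "w ` annihilator S0 = w' ` annihilator S0"
    using assms(9) unfolding direction_linear_image[OF weyl_linear[OF ww(1)]]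
      direction_linear_image[OF weyl_linear[OF ww(2)]] direction_H_eta[OF x0] .
  note combination = parallel_images_nonneg_combination[OF assms(1,4,6)]
  note w'_in_w = combination[OF assms(7,8) parallel]
    and w_in_w' = combination[OF assms(8,7) parallel[symmetric]]
  have "w' ` S0 \<subseteq> w ` S0"
    using w'_in_w w_in_w' by (intro mutual_nonneg_combinations_image[OF assms(1,2,4,6) ww]) blast+
  moreover have "w ` S0 \<subseteq> w' ` S0"
    using w'_in_w w_in_w' by (intro mutual_nonneg_combinations_image[OF assms(1,2,4,6) ww(2,1)]) blast+
  ultimately show ?thesis
    using weyl_image_H_eta_mono[OF root_system_nondegenerate[OF assms(1)] assms(5) S0R] ww
    by blast
qed

end
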